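(* Let $f(t)\in\mathbb{Q}[t]$ be irreducible of degree $3$. Then there are infinitely many quadratic polynomials $g(y)\in\mathbb{Q}[y]$ for which $f(g(y))$ is reducible in $\mathbb{Q}[y]$, and which are pairwise distinct under transformations replacing $y$ by a polynomial in $y$ (that is, no one of them is obtained from another by substituting a polynomial $p(y)\in\mathbb{Q}[y]$ for $y$). *)

theory Defs
  imports "HOL-Computational_Algebra.Polynomial_Factorial"
begin

end

theory Submission
  imports Defs "HOL-Computational_Algebra.Field_as_Ring"
begin

(* Since f is irreducible of degree 3 it has no rational root. Fix k, put F(t) = f(k + t) and let
   R(y) = y^3 F(1/y) be the reversed cubic; R(0) is the leading coefficient of f, so y is invertible
   modulo R, with an inverse q of degree 2. Then y^3 F(q) is congruent to y^3 F(1/y) = R, hence to 0,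
   modulo R, and as y is coprime to R, the cubic R divides F(q) = f(k + q): the sextic f(g_k) with
   g_k = k + q is reducible.
   A substitution keeping degree 2 is affine, and affine substitutions preserve the vertex value
   c - b^2/(4a) of a y^2 + b y + c. The vertex value of g_k is a non-constant rational function of k,
   so it takes infinitely many values, and one g_k per value gives the required family. *)

lemma X_mult_minus_one_dvd_pcompose_diff_reflect_poly:
  fixes p q :: "'a::comm_ring_1 poly"
  shows "[:0,1:] * q - 1 dvd [:0,1:] ^ degree p * pcompose p q - reflect_poly p"
proof -
  define X :: "'a poly" where "X = [:0,1:]"
  define n where "n = degree p"
  have X_power: "pcompose (X ^ i) q = q ^ i" for i
    by (induction i) (simp_all add: X_def pcompose_mult pcompose_1 pcompose_pCons)
  have "X ^ n * pcompose p q = (\<Sum>i\<le>n. smult (coeff p i) (X ^ (n - i) * (X * q) ^ i))"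
  proof -
    have "X ^ n * pcompose p q = (\<Sum>i\<le>n. smult (coeff p i) (X ^ n * q ^ i))"
      by (subst (1) poly_as_sum_of_monoms [symmetric])
        (simp add: n_def pcompose_sum sum_distrib_left monom_altdef pcompose_smult X_power X_def[symmetric])
    also have "\<dots> = (\<Sum>i\<le>n. smult (coeff p i) (X ^ (n - i) * (X * q) ^ i))"
      by (intro sum.cong refl) (simp add: power_mult_distrib mult.assoc [symmetric] power_add [symmetric])
    finally show ?thesis .
  qed
  moreover have "reflect_poly p = (\<Sum>i\<le>n. smult (coeff p i) (X ^ (n - i)))"
  proof -
    have "reflect_poly p = (\<Sum>i\<le>n. monom (coeff (reflect_poly p) i) i)"
      by (rule poly_as_sum_of_monoms' [symmetric]) (simp add: n_def degree_reflect_poly_le)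
    also have "\<dots> = (\<Sum>i\<le>n. monom (coeff p i) (n - i))"
      by (rule sum.reindex_bij_witness [where i = "\<lambda>i. n - i" and j = "\<lambda>i. n - i"])
        (auto simp: coeff_reflect_poly n_def)
    finally show ?thesis by (simp add: monom_altdef X_def)
  qed
  ultimately have "X ^ n * pcompose p q - reflect_poly p =
      (\<Sum>i\<le>n. smult (coeff p i) (X ^ (n - i) * ((X * q) ^ i - 1)))"
    by (simp add: sum_subtractf algebra_simps smult_diff_right)
  also have "X * q - 1 dvd \<dots>"
    by (intro dvd_sum dvd_smult dvd_mult) (simp add: power_diff_1_eq)
  finally show ?thesis by (simp add: X_def n_def)
qed

definition inverse_X_mod_reflect :: "'a::field poly \<Rightarrow> 'a poly" where
  "inverse_X_mod_reflect p = smult (- inverse (lead_coeff p)) (poly_shift 1 (reflect_poly p))"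

lemma X_mult_inverse_X_mod_reflect:
  fixes p :: "'a::field poly"
  assumes "p \<noteq> 0"
  shows "[:0,1:] * inverse_X_mod_reflect p = 1 - smult (inverse (lead_coeff p)) (reflect_poly p)"
proof (rule poly_eqI)
  fix i
  show "coeff ([:0,1:] * inverse_X_mod_reflect p) i =
      coeff (1 - smult (inverse (lead_coeff p)) (reflect_poly p)) i"
    using assms by (cases i) (simp_all add: inverse_X_mod_reflect_def coeff_poly_shift)
qed

lemma reflect_poly_dvd_pcompose_inverse_X_mod_reflect:
  fixes p :: "'a::field_gcd poly"
  shows "reflect_poly p dvd pcompose p (inverse_X_mod_reflect p)"
proof (cases "p = 0")
  case False
  define X :: "'a poly" where "X = [:0,1:]"
  have "X * inverse_X_mod_reflect p - 1 = smult (- inverse (lead_coeff p)) (reflect_poly p)"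
    using X_mult_inverse_X_mod_reflect [OF False] by (simp add: X_def)
  then have "reflect_poly p dvd X * inverse_X_mod_reflect p - 1"
    by (simp add: dvd_smult)
  then have "reflect_poly p dvd X ^ degree p * pcompose p (inverse_X_mod_reflect p) - reflect_poly p"
    using X_mult_minus_one_dvd_pcompose_diff_reflect_poly unfolding X_def by (rule dvd_trans)
  then have "reflect_poly p dvd X ^ degree p * pcompose p (inverse_X_mod_reflect p)"
    by (metis dvd_diff dvd_refl diff_add_cancel dvd_add)
  moreover have "coprime (reflect_poly p) (X ^ degree p)"
  proof -
    have "prime_elem X" unfolding X_def by (rule prime_elem_linear_field_poly) simp
    moreover have "\<not> X dvd reflect_poly p"
      using False by (simp add: X_def dvd_iff_poly_eq_0 [of 0, simplified])
    ultimately show ?thesis by (rule prime_elem_imp_power_coprime)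
  qed
  ultimately show ?thesis by (simp add: coprime_dvd_mult_right_iff)
qed simp

lemma degree_inverse_X_mod_reflect:
  fixes p :: "'a::field poly"
  assumes "coeff p 0 \<noteq> 0"
  shows "degree (inverse_X_mod_reflect p) = degree p - 1"
proof (rule antisym)
  have "lead_coeff p \<noteq> 0" using assms by auto
  show "degree (inverse_X_mod_reflect p) \<le> degree p - 1"
    by (rule degree_le) (auto simp: inverse_X_mod_reflect_def coeff_poly_shift coeff_reflect_poly)
  show "degree p - 1 \<le> degree (inverse_X_mod_reflect p)"
  proof (cases "degree p = 0")
    case False
    then show ?thesis using assms \<open>lead_coeff p \<noteq> 0\<close>
      by (intro le_degree) (simp add: inverse_X_mod_reflect_def coeff_poly_shift coeff_reflect_poly)
  qed simp
qed

lemma not_irreducible_if_dvd_lower_degree: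
  fixes a b :: "'a::field poly"
  assumes "a dvd b" "b \<noteq> 0" "0 < degree a" "degree a < degree b"
  shows "\<not> irreducible b"
proof
  assume irr: "irreducible b"
  from \<open>a dvd b\<close> obtain c where b: "b = a * c" ..
  with assms have "a \<noteq> 0" "c \<noteq> 0" by auto
  with assms b have "0 < degree c" by (simp add: degree_mult_eq)
  with irr b \<open>0 < degree a\<close> show False
    by (metis irreducibleD is_unit_iff_degree \<open>a \<noteq> 0\<close> \<open>c \<noteq> 0\<close> less_not_refl)
qed

lemma poly_neq_0_if_irreducible:
  fixes p :: "'a::field poly"
  assumes "irreducible p" "2 \<le> degree p"
  shows "poly p x \<noteq> 0"
proof
  assume "poly p x = 0"
  then have "[:-x, 1:] dvd p" by (simp add: dvd_iff_poly_eq_0)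
  moreover have "p \<noteq> 0" using assms(2) by auto
  ultimately show False
    using assms not_irreducible_if_dvd_lower_degree [of "[:-x, 1:]" p] by auto
qed

definition reducing_poly :: "'a::field poly \<Rightarrow> 'a \<Rightarrow> 'a poly" where
  "reducing_poly f k = [:k:] + inverse_X_mod_reflect (pcompose f [:k, 1:])"

lemma degree_reducing_poly:
  fixes f :: "'a::field poly"
  assumes "poly f k \<noteq> 0"
  shows "degree (reducing_poly f k) = degree f - 1"
proof -
  have "degree (inverse_X_mod_reflect (pcompose f [:k, 1:])) = degree f - 1"
    using assms by (simp add: degree_inverse_X_mod_reflect degree_pcompose)
  moreover have "degree ([:k:] + q) = degree q" for q :: "'a poly"
    by (cases "degree q = 0") (auto simp: degree_add_eq_right elim: degree_eq_zeroE)
  ultimately show ?thesis by (simp add: reducing_poly_def)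
qed

lemma not_irreducible_pcompose_reducing_poly:
  fixes f :: "'a::field_gcd poly"
  assumes "3 \<le> degree f" "poly f k \<noteq> 0"
  shows "\<not> irreducible (pcompose f (reducing_poly f k))"
proof -
  define F where "F = pcompose f [:k, 1:]"
  have "pcompose f (reducing_poly f k) = pcompose F (inverse_X_mod_reflect F)"
    by (simp add: reducing_poly_def F_def pcompose_assoc [symmetric] pcompose_pCons)
  moreover have "reflect_poly F dvd pcompose F (inverse_X_mod_reflect F)"
    by (rule reflect_poly_dvd_pcompose_inverse_X_mod_reflect)
  moreover have "degree (reflect_poly F) = degree f" "coeff F 0 \<noteq> 0" "degree F = degree f"
    using assms by (simp_all add: F_def degree_pcompose)
  moreover have "degree f < degree (pcompose f (reducing_poly f k))"
  proof -
    have "degree f * 1 < degree f * (degree f - 1)"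
      using assms(1) by (intro mult_strict_left_mono) auto
    then show ?thesis using assms by (simp add: degree_pcompose degree_reducing_poly)
  qed
  ultimately show ?thesis
    using assms by (intro not_irreducible_if_dvd_lower_degree [of "reflect_poly F"]) auto
qed

definition vertex_value :: "'a::field poly \<Rightarrow> 'a" where
  "vertex_value g = coeff g 0 - (coeff g 1)^2 / (4 * coeff g 2)"

lemma vertex_value_pcompose:
  fixes g p :: "'a::field_char_0 poly"
  assumes "degree g = 2" "degree (pcompose g p) = 2"
  shows "vertex_value (pcompose g p) = vertex_value g"
proof -
  have "degree p = 1" using assms by (simp add: degree_pcompose)
  then have p: "p = [:coeff p 0, coeff p 1:]" and a: "coeff p 1 \<noteq> 0"
    by (auto intro!: poly_eqI simp: coeff_pCons coeff_eq_0 split: nat.split)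
      (metis One_nat_def leading_coeff_0_iff degree_0 zero_neq_one)
  have g: "g = [:coeff g 0, coeff g 1, coeff g 2:]" and c: "coeff g 2 \<noteq> 0"
    using assms(1) by (auto intro!: poly_eqI simp: coeff_pCons coeff_eq_0 numeral_2_eq_2 split: nat.split)
      (metis numeral_2_eq_2 leading_coeff_0_iff degree_0 zero_neq_numeral)
  have "vertex_value (pcompose [:c0, c1, c2:] [:b, a:]) = vertex_value [:c0, c1, c2:]"
    if "a \<noteq> 0" "c2 \<noteq> 0" for a b c0 c1 c2 :: 'a
    using that by (simp add: vertex_value_def pcompose_pCons numeral_2_eq_2 field_simps power2_eq_square)
  from this [OF a c] p g show ?thesis by metis
qed

lemma taylor_shift_cubic:
  fixes c0 c1 c2 c3 k :: "'a::comm_ring_1"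
  shows "pcompose [:c0, c1, c2, c3:] [:k, 1:] =
    [:c0 + c1*k + c2*k^2 + c3*k^3, c1 + 2*c2*k + 3*c3*k^2, c2 + 3*c3*k, c3:]"
  by (simp add: pcompose_pCons algebra_simps power2_eq_square power3_eq_cube one_pCons numeral_poly)

lemma inverse_X_mod_reflect_cubic:
  fixes d0 d1 d2 d3 :: "'a::field"
  assumes "d0 \<noteq> 0" "d3 \<noteq> 0"
  shows "inverse_X_mod_reflect [:d0, d1, d2, d3:] = [:-d2/d3, -d1/d3, -d0/d3:]"
proof (rule poly_eqI)
  fix i
  show "coeff (inverse_X_mod_reflect [:d0, d1, d2, d3:]) i = coeff [:-d2/d3, -d1/d3, -d0/d3:] i"
    using assms by (simp add: inverse_X_mod_reflect_def coeff_poly_shift coeff_reflect_poly coeff_pCons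
      numeral_eq_Suc divide_inverse split: nat.split)
qed

lemma reducing_poly_cubic:
  fixes c0 c1 c2 c3 k :: "'a::field"
  defines "d0 \<equiv> c0 + c1*k + c2*k^2 + c3*k^3"
    and "d1 \<equiv> c1 + 2*c2*k + 3*c3*k^2"
    and "d2 \<equiv> c2 + 3*c3*k"
  assumes "c3 \<noteq> 0" "d0 \<noteq> 0"
  shows "reducing_poly [:c0, c1, c2, c3:] k = [:k - d2/c3, -d1/c3, -d0/c3:]"
  using assms
  by (simp add: reducing_poly_def taylor_shift_cubic inverse_X_mod_reflect_cubic minus_divide_left)

lemma finite_vertex_value_reducing_poly_fibre:
  fixes f :: "'a::field_char_0 poly"
  assumes "degree f = 3" and no_root: "\<And>k. poly f k \<noteq> 0"
  shows "finite {k. vertex_value (reducing_poly f k) = c}"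
proof -
  define c0 c1 c2 c3 where "c0 = coeff f 0" "c1 = coeff f 1" "c2 = coeff f 2" "c3 = coeff f 3"
  have f: "f = [:c0, c1, c2, c3:]"
    using assms(1) unfolding c0_c1_c2_c3_def
    by (intro poly_eqI) (auto simp: coeff_pCons coeff_eq_0 numeral_2_eq_2 numeral_3_eq_3 split: nat.split)
  have "c3 \<noteq> 0"
    using assms(1) unfolding c0_c1_c2_c3_def by (metis leading_coeff_0_iff degree_0 zero_neq_numeral)
  (* poly P k = 4 c3 f(k) (vertex_value (reducing_poly f k) - c) *)
  define P where
    "P = smult (4*c3) (f * [:-c, 1:]) - smult 4 (f * [:c2, 3*c3:]) + [:c1, 2*c2, 3*c3:]^2"
  have "coeff P 4 = c3^2"
    by (simp add: P_def f power2_eq_square numeral_eq_Suc)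
  with \<open>c3 \<noteq> 0\<close> have "P \<noteq> 0" by auto
  have "poly P k = 0" if "vertex_value (reducing_poly f k) = c" for k
  proof -
    define d0 d1 d2 where
      "d0 = c0 + c1*k + c2*k^2 + c3*k^3" "d1 = c1 + 2*c2*k + 3*c3*k^2" "d2 = c2 + 3*c3*k"
    have "d0 \<noteq> 0"
      using no_root [of k] by (simp add: f d0_d1_d2_def algebra_simps power2_eq_square power3_eq_cube)
    have "reducing_poly f k = [:k - d2/c3, -d1/c3, -d0/c3:]"
      using \<open>c3 \<noteq> 0\<close> \<open>d0 \<noteq> 0\<close> unfolding f d0_d1_d2_def by (rule reducing_poly_cubic)
    then have "k - d2/c3 + d1^2 / (4*c3*d0) = c"
      using that \<open>c3 \<noteq> 0\<close> by (simp add: vertex_value_def numeral_2_eq_2 power2_eq_square ac_simps)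
    moreover have
      "4*c3*d0*(k - c) - 4*d0*d2 + d1^2 = 4*c3*d0*((k - d2/c3 + d1^2 / (4*c3*d0)) - c)"
      using \<open>c3 \<noteq> 0\<close> \<open>d0 \<noteq> 0\<close> by (simp add: field_simps power2_eq_square)
    moreover have "poly P k = 4*c3*d0*(k - c) - 4*d0*d2 + d1^2"
      by (simp add: P_def f d0_d1_d2_def algebra_simps power2_eq_square power3_eq_cube)
    ultimately show "poly P k = 0" by simp
  qed
  then have "{k. vertex_value (reducing_poly f k) = c} \<subseteq> {k. poly P k = 0}" by blast
  moreover have "finite {k. poly P k = 0}" using \<open>P \<noteq> 0\<close> by (rule poly_roots_finite)
  ultimately show ?thesis by (rule finite_subset)
qed

lemma infinite_range_if_finite_fibres:
  assumes "infinite (UNIV :: 'a set)" "\<And>c. finite {x :: 'a. h x = c}"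
  shows "infinite (range h)"
proof
  assume "finite (range h)"
  then have "finite (\<Union>c\<in>range h. {x. h x = c})" using assms(2) by blast
  moreover have "(\<Union>c\<in>range h. {x. h x = c}) = UNIV" by blast
  ultimately show False using assms(1) by simp
qed

lemma infinite_subset_inj_on:
  assumes "infinite (v ` A)"
  obtains S where "S \<subseteq> A" "infinite S" "inj_on v S"
proof
  let ?S = "inv_into A v ` v ` A"
  show "?S \<subseteq> A" by (auto intro: inv_into_into)
  have "v ` ?S = v ` A" by (force simp: image_image f_inv_into_f)
  then show "infinite ?S" using assms by (metis finite_imageI)
  show "inj_on v ?S" by (rule inj_onI) (auto simp: f_inv_into_f)
qed

theorem theorem3p2:
  fixes f :: "rat poly"
  assumes "irreducible f" and "degree f = 3"
  shows "\<exists>S :: rat poly set. infinite S \<and>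
           (\<forall>g\<in>S. degree g = 2 \<and> \<not> irreducible (pcompose f g)) \<and>
           (\<forall>g1\<in>S. \<forall>g2\<in>S. g1 \<noteq> g2 \<longrightarrow> \<not> (\<exists>p :: rat poly. g1 = pcompose g2 p))"
proof -
  have no_root: "poly f k \<noteq> 0" for k
    using assms by (simp add: poly_neq_0_if_irreducible)
  have "infinite (range (vertex_value \<circ> reducing_poly f))"
    using assms(2) no_root
    by (intro infinite_range_if_finite_fibres)
      (simp_all add: finite_vertex_value_reducing_poly_fibre infinite_UNIV_char_0)
  then obtain S where S: "S \<subseteq> range (reducing_poly f)" "infinite S" "inj_on vertex_value S"
    by (metis image_comp infinite_subset_inj_on)
  have reducing: "degree g = 2 \<and> \<not> irreducible (pcompose f g)" if "g \<in> S" for g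
    using S(1) that assms no_root
    by (auto simp: degree_reducing_poly not_irreducible_pcompose_reducing_poly)
  have "vertex_value g1 = vertex_value g2" if "g1 \<in> S" "g2 \<in> S" "g1 = pcompose g2 p" for g1 g2 p
    using vertex_value_pcompose [of g2 p] reducing that by simp
  then have "\<forall>g1\<in>S. \<forall>g2\<in>S. g1 \<noteq> g2 \<longrightarrow> \<not> (\<exists>p. g1 = pcompose g2 p)"
    using S(3) by (blast dest: inj_onD)
  with S(2) reducing show ?thesis by blast
qed

end
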